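(* Let $x \geq 1$ be an integer. For $m \geq 1$ let $N(m,x)$ denote the number of binary words of length $m$ that contain none of the patterns in $\mathcal{T}_x = \{0\mathbf{1}^y0,\ 1\mathbf{0}^y1 : 1 \leq y \leq x\}$ as a substring of consecutive bits, and set by convention $N(m,x) \triangleq 2$ for all integers $m \leq 1$. Then for every $m \geq 2$, $$N(m,x) = N(m-1,x) + N(m-x-1,x).$$
   Context: $\mathbf{0}^r$ (resp. $\mathbf{1}^r$) denotes a run of $r$ consecutive $0$'s (resp. $1$'s). A pattern is contained in a word if it appears as a contiguous block of consecutive bits. Note that for $m=1$ the convention value $2$ coincides with the actual count of binary words of length $1$. *)

theory Defs
  imports Main "HOL-Library.Sublist"
begin

text \<open>Binary words are lists of booleans (False = bit 0, True = bit 1).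
  The forbidden pattern set T_x = {0 1^y 0, 1 0^y 1 : 1 <= y <= x}.\<close>

definition forbidden_patterns :: "nat \<Rightarrow> bool list set" where
  "forbidden_patterns x =
     {[False] @ replicate y True @ [False] | y. 1 \<le> y \<and> y \<le> x} \<union>
     {[True] @ replicate y False @ [True] | y. 1 \<le> y \<and> y \<le> x}"

definition avoids :: "nat \<Rightarrow> bool list \<Rightarrow> bool" where
  "avoids x w \<longleftrightarrow> (\<forall>p \<in> forbidden_patterns x. \<not> sublist p w)"

definition N :: "int \<Rightarrow> nat \<Rightarrow> nat" where
  "N m x = (if m \<le> 1 then 2
            else card {w :: bool list. length w = nat m \<and> avoids x w})"

end

theory Submission
  imports Defs
begin

text \<open>Split an avoiding word of length \<open>n + 1\<close> into its first bit \<open>b\<close> and its tail \<open>u\<close>,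
  whose first bit is \<open>c\<close>. If \<open>b = c\<close>, no forbidden pattern can start at position 0,
  so the word avoids \<open>T\<^sub>x\<close> iff \<open>u\<close> does. If \<open>b = \<not> c\<close>, the only new candidate
  occurrences are the prefixes \<open>(\<not> c) c\<^sup>y (\<not> c)\<close>, and they are all absent iff the first
  \<open>x + 1\<close> bits of \<open>u\<close> agree. For \<open>n \<le> x + 1\<close> such tails are the two constant words;
  for \<open>n > x\<close> deleting their first \<open>x\<close> bits is a bijection onto the avoiding words of
  length \<open>n - x\<close>. Hence \<open>N(n + 1) = N(n) + N(n - x)\<close>, the convention \<open>N = 2\<close> taking
  care of the short case.\<close>

lemma forbidden_patterns_eq:
  "forbidden_patterns x = {a # replicate y (\<not> a) @ [a] | a y. 1 \<le> y \<and> y \<le> x}"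
  unfolding forbidden_patterns_def by (auto intro: exI[of _ True] exI[of _ False])

lemma avoids_Cons_iff:
  "avoids x (a # w) \<longleftrightarrow> avoids x w \<and> (\<forall>p \<in> forbidden_patterns x. \<not> prefix p (a # w))"
  unfolding avoids_def sublist_Cons_right by auto

lemma avoids_Cons_Cons_same: "avoids x (b # b # v) \<longleftrightarrow> avoids x (b # v)"
proof -
  have "\<not> prefix (a # replicate y (\<not> a) @ [a]) (b # b # v)" if "1 \<le> y" for a y
    using that by (cases y) auto
  then show ?thesis
    using avoids_Cons_iff[of x b "b # v"] unfolding forbidden_patterns_eq by blast
qed

lemma avoids_replicate_append_Cons:
  "avoids x (replicate k c @ c # v) \<longleftrightarrow> avoids x (c # v)"
  by (induction k) (simp_all add: replicate_app_Cons_same avoids_Cons_Cons_same)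

lemma avoids_replicate: "avoids x (replicate n c)"
proof -
  have "\<not> sublist (a # replicate y (\<not> a) @ [a]) (replicate n c)" if "1 \<le> y" for a y
    using that set_mono_sublist[of _ "replicate n c"] by (cases y) fastforce+
  then show ?thesis
    unfolding avoids_def forbidden_patterns_eq by blast
qed

lemma prefix_replicate_snoc_iff:
  "prefix (replicate y c @ [d]) u \<longleftrightarrow> y < length u \<and> (\<forall>j<y. u ! j = c) \<and> u ! y = d"
proof (induction y arbitrary: u)
  case 0
  then show ?case by (cases u) auto
next
  case (Suc y)
  then show ?case by (cases u) (auto simp: less_Suc_eq_0_disj)
qed

lemma all_less_iff_no_least_counterexample:
  fixes P :: "nat \<Rightarrow> bool"
  shows "(\<forall>i<k. P i) \<longleftrightarrow> \<not> (\<exists>y<k. (\<forall>j<y. P j) \<and> \<not> P y)"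
proof
  assume no_least: "\<not> (\<exists>y<k. (\<forall>j<y. P j) \<and> \<not> P y)"
  show "\<forall>i<k. P i"
  proof (intro allI impI)
    fix i assume "i < k"
    then show "P i"
    proof (induction i rule: less_induct)
      case (less i)
      then have "\<forall>j<i. P j" by simp
      with less.prems no_least show "P i" by blast
    qed
  qed
qed blast

lemma avoids_hd_Cons_iff:
  assumes "u \<noteq> []"
  shows "avoids x (hd u # u) \<longleftrightarrow> avoids x u"
  using assms avoids_Cons_Cons_same by (cases u) auto

definition constant_prefix :: "nat \<Rightarrow> 'a list \<Rightarrow> bool" where
  "constant_prefix k u \<longleftrightarrow> (\<forall>i<k. i < length u \<longrightarrow> u ! i = hd u)"

lemma avoids_Cons_hd_flip_iff:
  assumes "u \<noteq> []"
  shows "avoids x ((\<not> hd u) # u) \<longleftrightarrow> avoids x u \<and> constant_prefix (Suc x) u"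
proof -
  let ?c = "hd u"
  have flip_prefix_iff: "prefix (a # replicate y (\<not> a) @ [a]) ((\<not> ?c) # u) \<longleftrightarrow>
      a = (\<not> ?c) \<and> prefix (replicate y ?c @ [\<not> ?c]) u" for a y
    by auto
  have "(\<forall>p \<in> forbidden_patterns x. \<not> prefix p ((\<not> ?c) # u)) \<longleftrightarrow>
      (\<forall>a y. 1 \<le> y \<and> y \<le> x \<longrightarrow> \<not> prefix (a # replicate y (\<not> a) @ [a]) ((\<not> ?c) # u))"
    unfolding forbidden_patterns_eq by blast
  also have "\<dots> \<longleftrightarrow> \<not> (\<exists>y. 1 \<le> y \<and> y \<le> x \<and> prefix (replicate y ?c @ [\<not> ?c]) u)"
    using flip_prefix_iff[of "\<not> ?c"] flip_prefix_iff by (intro iffI) auto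
  also have "\<dots> \<longleftrightarrow>
      \<not> (\<exists>y<Suc x. (\<forall>j<y. j < length u \<longrightarrow> u ! j = ?c) \<and> \<not> (y < length u \<longrightarrow> u ! y = ?c))"
  proof -
    have "u ! 0 = ?c" using assms by (simp add: hd_conv_nth)
    then have "(\<forall>j<y. j < length u \<longrightarrow> u ! j = ?c) \<and> \<not> (y < length u \<longrightarrow> u ! y = ?c) \<longleftrightarrow>
        1 \<le> y \<and> y < length u \<and> (\<forall>j<y. u ! j = ?c) \<and> u ! y = (\<not> ?c)" for y
      by (cases y) auto
    then show ?thesis
      unfolding prefix_replicate_snoc_iff by (auto simp: less_Suc_eq_le)
  qed
  also have "\<dots> \<longleftrightarrow> constant_prefix (Suc x) u"
    unfolding constant_prefix_def by (rule all_less_iff_no_least_counterexample[symmetric])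
  finally show ?thesis
    using avoids_Cons_iff by blast
qed

definition avoiding_words :: "nat \<Rightarrow> nat \<Rightarrow> bool list set" where
  "avoiding_words x n = {w. length w = n \<and> avoids x w}"

lemma finite_avoiding_words: "finite (avoiding_words x n)"
  by (rule finite_subset[OF _ finite_lists_length_eq[of UNIV n]]) (auto simp: avoiding_words_def)

lemma avoiding_words_one: "avoiding_words x 1 = {[True], [False]}"
  using avoids_replicate[of x 1] by (auto simp: avoiding_words_def length_Suc_conv)

lemma N_eq_card_avoiding_words:
  assumes "n \<ge> 1"
  shows "N (int n) x = card (avoiding_words x n)"
proof (cases "n = 1")
  case True
  then show ?thesis using avoiding_words_one[of x] by (simp add: N_def)
next
  case False
  then show ?thesis using assms by (simp add: N_def avoiding_words_def)
qed

lemma avoiding_words_Suc: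
  assumes "n \<ge> 1"
  shows "avoiding_words x (Suc n) =
    (\<lambda>u. hd u # u) ` avoiding_words x n \<union>
    (\<lambda>u. (\<not> hd u) # u) ` {u \<in> avoiding_words x n. constant_prefix (Suc x) u}"
    (is "?lhs = ?same \<union> ?flip")
proof
  show "?lhs \<subseteq> ?same \<union> ?flip"
  proof
    fix w assume "w \<in> ?lhs"
    then obtain b u where w: "w = b # u" and u: "length u = n" and av: "avoids x (b # u)"
      by (auto simp: avoiding_words_def length_Suc_conv)
    have "u \<noteq> []" using u assms by auto
    moreover have "avoids x u" using av avoids_Cons_iff by blast
    ultimately show "w \<in> ?same \<union> ?flip"
      using w u av avoids_Cons_hd_flip_iff[of u x]
      by (cases "b = hd u") (auto simp: avoiding_words_def)
  qed
next
  have "u \<noteq> []" if "u \<in> avoiding_words x n" for u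
    using that assms by (auto simp: avoiding_words_def)
  then show "?same \<union> ?flip \<subseteq> ?lhs"
    using avoids_hd_Cons_iff avoids_Cons_hd_flip_iff by (fastforce simp: avoiding_words_def)
qed

lemma card_avoiding_words_Suc:
  assumes "n \<ge> 1"
  shows "card (avoiding_words x (Suc n)) =
    card (avoiding_words x n) + card {u \<in> avoiding_words x n. constant_prefix (Suc x) u}"
proof -
  have "inj_on (\<lambda>u. hd u # u) A" "inj_on (\<lambda>u. (\<not> hd u) # u) A" for A
    by (auto intro: inj_onI)
  then show ?thesis
    unfolding avoiding_words_Suc[OF assms]
    by (subst card_Un_disjoint) (auto simp: finite_avoiding_words card_image)
qed

lemma constant_prefix_short_iff:
  assumes "length u \<le> k"
  shows "constant_prefix k u \<longleftrightarrow> u = replicate (length u) (hd u)"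
proof
  assume "constant_prefix k u"
  then show "u = replicate (length u) (hd u)"
    using assms unfolding constant_prefix_def by (intro nth_equalityI) auto
next
  assume "u = replicate (length u) (hd u)"
  then show "constant_prefix k u"
    unfolding constant_prefix_def by (metis nth_replicate)
qed

lemma constant_prefix_pad:
  assumes "v \<noteq> []"
  shows "constant_prefix (Suc x) (replicate x (hd v) @ v)"
  using assms unfolding constant_prefix_def
  by (auto simp: nth_append hd_append hd_conv_nth less_Suc_eq)

lemma constant_prefix_long_iff:
  assumes "x < length u"
  shows "constant_prefix (Suc x) u \<longleftrightarrow> u = replicate x (hd (drop x u)) @ drop x u"
proof
  assume "constant_prefix (Suc x) u"
  then have "\<forall>i\<le>x. u ! i = hd u"
    using assms unfolding constant_prefix_def by auto
  then have "take x u = replicate x (hd u)" and "hd (drop x u) = hd u"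
    using assms by (auto intro: nth_equalityI simp: hd_drop_conv_nth)
  then show "u = replicate x (hd (drop x u)) @ drop x u"
    by (metis append_take_drop_id)
next
  assume "u = replicate x (hd (drop x u)) @ drop x u"
  moreover have "drop x u \<noteq> []" using assms by simp
  ultimately show "constant_prefix (Suc x) u"
    by (metis constant_prefix_pad)
qed

lemma card_constant_prefix_short:
  assumes "1 \<le> n" "n \<le> Suc x"
  shows "card {u \<in> avoiding_words x n. constant_prefix (Suc x) u} = 2"
proof -
  have "{u \<in> avoiding_words x n. constant_prefix (Suc x) u} = {replicate n True, replicate n False}"
  proof (intro equalityI subsetI)
    fix u assume "u \<in> {u \<in> avoiding_words x n. constant_prefix (Suc x) u}"
    then have "u = replicate n (hd u)"
      using assms constant_prefix_short_iff[of u "Suc x"] by (auto simp: avoiding_words_def)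
    then show "u \<in> {replicate n True, replicate n False}"
      by (cases "hd u") auto
  next
    fix u assume "u \<in> {replicate n True, replicate n False}"
    moreover have "hd (replicate n c) = c" for c :: bool
      using assms by (cases n) auto
    ultimately show "u \<in> {u \<in> avoiding_words x n. constant_prefix (Suc x) u}"
      using assms constant_prefix_short_iff[of u "Suc x"] avoids_replicate
      by (auto simp: avoiding_words_def)
  qed
  moreover have "replicate n True \<noteq> replicate n False"
    using assms by (cases n) auto
  ultimately show ?thesis by simp
qed

lemma card_constant_prefix_long:
  assumes "x < n"
  shows "card {u \<in> avoiding_words x n. constant_prefix (Suc x) u} = card (avoiding_words x (n - x))"
proof -
  let ?pad = "\<lambda>v. replicate x (hd v) @ v"
  have avoids_pad: "avoids x (?pad v) \<longleftrightarrow> avoids x v" if "v \<noteq> []" for v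
    using that by (cases v) (simp_all add: avoids_replicate_append_Cons)
  have "{u \<in> avoiding_words x n. constant_prefix (Suc x) u} = ?pad ` avoiding_words x (n - x)"
  proof (intro equalityI subsetI)
    fix u assume "u \<in> {u \<in> avoiding_words x n. constant_prefix (Suc x) u}"
    then have u: "u = ?pad (drop x u)" "length u = n" "avoids x u"
      using assms constant_prefix_long_iff by (auto simp: avoiding_words_def)
    moreover have "drop x u \<noteq> []" using assms u(2) by simp
    ultimately have "avoids x (drop x u)"
      using avoids_pad by metis
    then show "u \<in> ?pad ` avoiding_words x (n - x)"
      using u(1,2) by (intro image_eqI[where x = "drop x u"]) (auto simp: avoiding_words_def)
  next
    fix u assume "u \<in> ?pad ` avoiding_words x (n - x)"
    then obtain v where u: "u = ?pad v" and v: "length v = n - x" "avoids x v"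
      by (auto simp: avoiding_words_def)
    then have "v \<noteq> []" using assms by auto
    then show "u \<in> {u \<in> avoiding_words x n. constant_prefix (Suc x) u}"
      using u v assms avoids_pad constant_prefix_long_iff[of x u] by (auto simp: avoiding_words_def)
  qed
  moreover have "inj_on ?pad (avoiding_words x (n - x))"
    by (rule inj_onI) (metis append_eq_append_conv length_replicate)
  ultimately show ?thesis
    by (simp add: card_image)
qed

theorem theorem1:
  fixes x :: nat and m :: int
  assumes "x \<ge> 1" and "m \<ge> 2"
  shows "N m x = N (m - 1) x + N (m - int x - 1) x"
proof -
  define n where "n = nat (m - 1)"
  have n: "m = int n + 1" "n \<ge> 1"
    using assms(2) by (simp_all add: n_def)
  have "N (m - int x - 1) x = card {u \<in> avoiding_words x n. constant_prefix (Suc x) u}"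
  proof (cases "n \<le> x")
    case True
    then show ?thesis using n card_constant_prefix_short by (simp add: N_def)
  next
    case False
    then show ?thesis
      using n card_constant_prefix_long N_eq_card_avoiding_words[of "n - x" x] by (simp add: of_nat_diff)
  qed
  moreover have "N m x = card (avoiding_words x (Suc n))" "N (m - 1) x = card (avoiding_words x n)"
    using n N_eq_card_avoiding_words[of "Suc n" x] N_eq_card_avoiding_words[of n x]
    by (simp_all add: ac_simps)
  ultimately show ?thesis
    using card_avoiding_words_Suc[OF n(2)] by simp
qed

end
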